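(* Let $0<\lambda\le1$ and $f\in\mathcal U(\lambda)$ with $\dfrac{z}{f(z)}=1+\sum_{k=1}^\infty b_kz^k$ in $\mathbb D$. Then the function $F$ defined by $$\frac{z}{F(z)}=1+\sum_{n=1}^\infty b_{2n}z^n,\qquad z\in\mathbb D,$$ belongs to $\mathcal U(\lambda)$.
   Context: $\mathbb D=\{z\in\mathbb C:|z|<1\}$. $\mathcal A$ is the class of functions $f$ analytic in $\mathbb D$ with $f(z)=z+\sum_{k\ge2}a_kz^k$. For $f\in\mathcal A$ with $f(z)\ne0$ for $z\in\mathbb D\setminus\{0\}$, set $U_f(z)=\left(\frac{z}{f(z)}\right)^2f'(z)-1$. For $0<\lambda\le1$, $\mathcal U(\lambda)$ is the class of such $f\in\mathcal A$ with $|U_f(z)|<\lambda$ for all $z\in\mathbb D$. *)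

theory Defs
  imports "HOL-Analysis.Analysis"
begin

abbreviation unit_disk :: "complex set" where
  "unit_disk \<equiv> ball 0 1"

definition classA :: "(complex \<Rightarrow> complex) set" where
  "classA = {f. f holomorphic_on unit_disk \<and> f 0 = 0 \<and> deriv f 0 = 1}"

text \<open>U_f(z) = (z / f z)^2 f'(z) - 1 (meaningful for z \<noteq> 0; at z = 0 its
  analytic extension has value 0).\<close>
definition U_op :: "(complex \<Rightarrow> complex) \<Rightarrow> complex \<Rightarrow> complex" where
  "U_op f z = (z / f z)^2 * deriv f z - 1"

text \<open>Class U(lambda).  The bound is imposed on the punctured disk, since at
  z = 0 the (continuously extended) value of U_f is 0 < lambda.\<close>
definition classU :: "real \<Rightarrow> (complex \<Rightarrow> complex) set" where
  "classU lam = {f. f \<in> classA \<and> (\<forall>z\<in>unit_disk - {0}. f z \<noteq> 0)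
      \<and> (\<forall>z\<in>unit_disk - {0}. cmod (U_op f z) < lam)}"

end

theory Submission
  imports Defs "HOL-Complex_Analysis.Complex_Analysis"
begin

text \<open>Write \<open>z / f z = 1 + G z\<close> with \<open>G 0 = 0\<close>. Then \<open>U_f = G - z G'\<close>, and the function \<open>F\<close>
  with \<open>z / F z = 1 + z V z\<close>, where \<open>G z + G (-z) = 2 z\<^sup>2 V (z\<^sup>2)\<close>, has \<open>U_F z = - z\<^sup>2 V' z\<close>.
  Differentiating the even-part identity shows that \<open>u (V u + 2 u V' u)\<close> is the mean of
  \<open>z G' z - G z\<close> over the two square roots \<open>\<plusminus>z\<close> of \<open>u\<close>, so it is bounded by \<open>\<lambda>\<close>; Schwarz's
  lemma removes the factor \<open>u\<close>. Since \<open>\<zeta> \<mapsto> \<zeta> V (\<zeta>\<^sup>2 w)\<close> has derivative \<open>V u + 2 u V' u\<close> at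
  \<open>u = \<zeta>\<^sup>2 w\<close>, the mean value inequality on \<open>[0, 1]\<close> gives \<open>|V w| \<le> \<lambda>\<close>, hence \<open>|w V' w| \<le> \<lambda>\<close>
  and \<open>|U_F z| \<le> |z| \<lambda> < \<lambda>\<close>.\<close>

lemma powser_holomorphic_on_ball:
  fixes c :: "nat \<Rightarrow> complex"
  assumes "\<And>z. z \<in> ball 0 r \<Longrightarrow> summable (\<lambda>n. c n * z ^ n)"
  shows "(\<lambda>z. \<Sum>n. c n * z ^ n) holomorphic_on ball 0 r"
proof -
  have "((\<lambda>z. \<Sum>n. c n * z ^ n) has_field_derivative (\<Sum>n. diffs c n * z ^ n)) (at z)"
    if "z \<in> ball 0 r" for z
  proof -
    have z: "norm z < r"
      using that by simp
    define k where "k = (r + norm z) / 2"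
    define K where "K = complex_of_real k"
    have "k > 0"
      using z norm_ge_zero[of z] unfolding k_def by argo
    then have "norm K = k"
      unfolding K_def by simp
    then have "norm z < norm K" "norm K < r"
      using z by (simp_all add: k_def)
    then show ?thesis
      using termdiffs_strong[of c K z] assms by simp
  qed
  then show ?thesis
    unfolding holomorphic_on_open[OF open_ball] by blast
qed

lemma sums_even_part:
  fixes c :: "nat \<Rightarrow> 'a::real_normed_field"
  assumes "(\<lambda>n. c n * z ^ n) sums s" and "(\<lambda>n. c n * (- z) ^ n) sums t"
  shows "(\<lambda>n. 2 * c (2 * n) * (z ^ 2) ^ n) sums (s + t)"
proof -
  define d where "d n = c n * z ^ n + c n * (- z) ^ n" for n
  have "d sums (s + t)"
    unfolding d_def using sums_add[OF assms] .
  moreover have "d n = 0" if "n \<notin> range (\<lambda>m. 2 * m)" for n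
  proof -
    have "odd n"
      using that by (metis evenE rangeI)
    then show ?thesis
      by (simp add: d_def)
  qed
  ultimately have "(\<lambda>m. d (2 * m)) sums (s + t)"
    using sums_mono_reindex[of "\<lambda>m. 2 * m" d] by (simp add: strict_mono_def)
  then show ?thesis
    by (simp add: d_def power_mult mult.assoc)
qed

lemma powser_even_part:
  fixes a :: "nat \<Rightarrow> complex"
  assumes summable: "\<And>z. z \<in> unit_disk \<Longrightarrow> summable (\<lambda>n. a n * z ^ n)" and "a 0 = 0"
  defines "G \<equiv> \<lambda>z. \<Sum>n. a n * z ^ n" and "V \<equiv> \<lambda>w. \<Sum>n. a (2 * Suc n) * w ^ n"
  shows "\<And>w. w \<in> unit_disk \<Longrightarrow> (\<lambda>n. a (2 * Suc n) * w ^ n) sums V w"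
    and "\<And>z. z \<in> unit_disk \<Longrightarrow> G z + G (- z) = 2 * z ^ 2 * V (z ^ 2)"
proof -
  have even: "(\<lambda>n. 2 * a (2 * Suc n) * (z ^ 2) ^ Suc n) sums (G z + G (- z))"
    if "z \<in> unit_disk" for z
  proof -
    have "(\<lambda>n. 2 * a (2 * n) * (z ^ 2) ^ n) sums (G z + G (- z))"
      unfolding G_def using that
      by (intro sums_even_part summable_sums summable) simp_all
    then show ?thesis
      using \<open>a 0 = 0\<close> by (subst sums_Suc_iff) simp
  qed
  show V_sums: "(\<lambda>n. a (2 * Suc n) * w ^ n) sums V w" if "w \<in> unit_disk" for w
  proof (cases "w = 0")
    case True
    then show ?thesis
      unfolding V_def using powser_sums_zero[of "\<lambda>n. a (2 * Suc n)"] by simp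
  next
    case False
    have "csqrt w \<in> unit_disk"
      using that by simp
    then have "summable (\<lambda>n. 2 * a (2 * Suc n) * w ^ Suc n)"
      using even[of "csqrt w"] by (auto simp: sums_iff)
    then have "summable (\<lambda>n. (2 * a (2 * Suc n) * w ^ Suc n) / (2 * w))"
      by (rule summable_divide)
    then show ?thesis
      unfolding V_def using False by (simp add: summable_sums)
  qed
  show "G z + G (- z) = 2 * z ^ 2 * V (z ^ 2)" if "z \<in> unit_disk" for z
  proof -
    have "z ^ 2 \<in> unit_disk"
      using that by (simp add: norm_power power_less_one_iff)
    then have "(\<lambda>n. 2 * z ^ 2 * (a (2 * Suc n) * (z ^ 2) ^ n)) sums (2 * z ^ 2 * V (z ^ 2))"
      using V_sums sums_mult by blast
    then have "(\<lambda>n. 2 * a (2 * Suc n) * (z ^ 2) ^ Suc n) sums (2 * z ^ 2 * V (z ^ 2))"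
      by (simp add: algebra_simps)
    then show ?thesis
      using even[OF that] sums_unique2 by blast
  qed
qed

lemma U_op_reciprocal_form:
  assumes "open S" "z \<in> S" "z \<noteq> 0"
    and G: "(G has_field_derivative G') (at z)" and nz: "1 + G z \<noteq> 0"
    and f: "\<And>x. x \<in> S \<Longrightarrow> f x = x / (1 + G x)"
  shows "U_op f z = G z - z * G'"
proof -
  have "((\<lambda>x. x / (1 + G x)) has_field_derivative (1 + G z - z * G') / (1 + G z) ^ 2) (at z)"
    using G nz by (auto intro!: derivative_eq_intros simp: power2_eq_square)
  then have "(f has_field_derivative (1 + G z - z * G') / (1 + G z) ^ 2) (at z)"
    using \<open>open S\<close> \<open>z \<in> S\<close> f[symmetric] by (rule has_field_derivative_transform_within_open)
  then have "deriv f z = (1 + G z - z * G') / (1 + G z) ^ 2"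
    by (rule DERIV_imp_deriv)
  moreover have "z / f z = 1 + G z"
    using f[OF \<open>z \<in> S\<close>] \<open>z \<noteq> 0\<close> nz by simp
  ultimately show ?thesis
    unfolding U_op_def using nz by simp
qed

lemma classU_reciprocal_bound:
  assumes "f \<in> classU lam" and G: "G holomorphic_on unit_disk"
    and f: "\<And>z. z \<in> unit_disk - {0} \<Longrightarrow> z / f z = 1 + G z"
    and z: "z \<in> unit_disk - {0}"
  shows "norm (z * deriv G z - G z) < lam"
proof -
  have fz: "1 + G x \<noteq> 0" "f x = x / (1 + G x)" if "x \<in> unit_disk - {0}" for x
  proof -
    have "f x \<noteq> 0"
      using that \<open>f \<in> classU lam\<close> by (simp add: classU_def)
    with f[OF that] that show "1 + G x \<noteq> 0"
      by auto
    have "f x = x / (x / f x)"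
      using that \<open>f x \<noteq> 0\<close> by simp
    with f[OF that] show "f x = x / (1 + G x)"
      by simp
  qed
  have "U_op f z = G z - z * deriv G z"
    using z fz holomorphic_derivI[OF G open_ball, of z UNIV]
    by (intro U_op_reciprocal_form[where S = "unit_disk - {0}"]) auto
  moreover have "norm (U_op f z) < lam"
    using \<open>f \<in> classU lam\<close> z by (simp add: classU_def)
  ultimately show ?thesis
    by (simp add: norm_minus_commute)
qed

lemma reciprocal_in_classU:
  assumes H: "H holomorphic_on unit_disk" and "H 0 = 0"
    and H_small: "\<And>z. z \<in> unit_disk \<Longrightarrow> norm (H z) < 1"
    and bound: "\<And>z. z \<in> unit_disk - {0} \<Longrightarrow> norm (H z - z * deriv H z) < lam"
  shows "(\<lambda>z. z / (1 + H z)) \<in> classU lam"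
proof -
  let ?F = "\<lambda>z. z / (1 + H z)"
  have nz: "1 + H z \<noteq> 0" if "z \<in> unit_disk" for z
  proof
    assume "1 + H z = 0"
    then have "H z = -1"
      by (simp add: add_eq_0_iff)
    then show False
      using H_small[OF that] by simp
  qed
  have F'0: "(?F has_field_derivative 1) (at 0)"
    using holomorphic_derivI[OF H open_ball, of 0 UNIV] \<open>H 0 = 0\<close>
    by (auto intro!: derivative_eq_intros)
  have "?F holomorphic_on unit_disk"
    using H nz by (intro holomorphic_intros) auto
  moreover have "deriv ?F 0 = 1"
    using F'0 by (rule DERIV_imp_deriv)
  moreover have "U_op ?F z = H z - z * deriv H z" if "z \<in> unit_disk - {0}" for z
    using that nz by (intro U_op_reciprocal_form[where S = unit_disk] holomorphic_derivI[OF H]) auto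
  ultimately show ?thesis
    using bound nz by (auto simp: classU_def classA_def)
qed

lemma norm_le_if_norm_mult_less:
  assumes g: "g holomorphic_on unit_disk"
    and bound: "\<And>w. w \<in> unit_disk \<Longrightarrow> norm (w * g w) < lam"
    and w: "w \<in> unit_disk"
  shows "norm (g w) \<le> lam"
proof -
  have "lam > 0"
    using bound[of 0] by simp
  define h where "h w = w * g w / lam" for w
  have h: "h holomorphic_on unit_disk"
    unfolding h_def using g \<open>lam > 0\<close> by (intro holomorphic_intros) auto
  have "h 0 = 0"
    by (simp add: h_def)
  have h_less: "norm (h w) < 1" if "norm w < 1" for w
    using bound[of w] that \<open>lam > 0\<close> by (simp add: h_def norm_divide divide_less_eq)
  show ?thesis
  proof (cases "w = 0")
    case True
    have "(h has_field_derivative g 0 / lam) (at 0)"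
      unfolding h_def using holomorphic_derivI[OF g open_ball, of 0 UNIV] \<open>lam > 0\<close>
      by (auto intro!: derivative_eq_intros)
    then have "deriv h 0 = g 0 / lam"
      by (rule DERIV_imp_deriv)
    then show ?thesis
      using Schwarz_Lemma(2)[OF h \<open>h 0 = 0\<close> h_less, of 0] True \<open>lam > 0\<close>
      by (simp add: norm_divide)
  next
    case False
    have "norm w * norm (g w) / lam \<le> norm w"
      using Schwarz_Lemma(1)[OF h \<open>h 0 = 0\<close> h_less] w \<open>lam > 0\<close>
      by (simp add: h_def norm_divide norm_mult)
    then show ?thesis
      using False \<open>lam > 0\<close> by (simp add: divide_le_eq)
  qed
qed

lemma norm_le_if_norm_add_2_mult_deriv_le:
  assumes V: "V holomorphic_on unit_disk"
    and bound: "\<And>w. w \<in> unit_disk \<Longrightarrow> norm (V w + 2 * w * deriv V w) \<le> lam"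
    and w: "w \<in> unit_disk"
  shows "norm (V w) \<le> lam"
proof -
  have in_disk: "\<zeta> ^ 2 * w \<in> unit_disk" if "\<zeta> \<in> cball 0 1" for \<zeta>
  proof -
    have "norm (\<zeta> ^ 2) \<le> 1"
      using that by (simp add: norm_power power_le_one)
    then have "norm (\<zeta> ^ 2) * norm w < 1"
      using w mult_left_le_one_le[of "norm w" "norm (\<zeta> ^ 2)"] by simp
    then show ?thesis
      by (simp add: norm_mult)
  qed
  have "norm ((\<lambda>\<zeta>. \<zeta> * V (\<zeta> ^ 2 * w)) 1 - (\<lambda>\<zeta>. \<zeta> * V (\<zeta> ^ 2 * w)) 0) \<le> lam * norm (1 - 0 :: complex)"
  proof (rule field_differentiable_bound[where S = "cball 0 1"])
    fix \<zeta> :: complex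
    assume \<zeta>: "\<zeta> \<in> cball 0 1"
    have "(V has_field_derivative deriv V (\<zeta> ^ 2 * w)) (at (\<zeta> ^ 2 * w))"
      using holomorphic_derivI[OF V open_ball in_disk[OF \<zeta>], of UNIV] by simp
    moreover have "((\<lambda>\<zeta>. \<zeta> ^ 2 * w) has_field_derivative 2 * \<zeta> * w) (at \<zeta>)"
      by (auto intro!: derivative_eq_intros)
    ultimately have "((\<lambda>\<zeta>. V (\<zeta> ^ 2 * w)) has_field_derivative deriv V (\<zeta> ^ 2 * w) * (2 * \<zeta> * w)) (at \<zeta>)"
      by (rule DERIV_chain2)
    then have "((\<lambda>\<zeta>. \<zeta> * V (\<zeta> ^ 2 * w)) has_field_derivative
        V (\<zeta> ^ 2 * w) + 2 * (\<zeta> ^ 2 * w) * deriv V (\<zeta> ^ 2 * w)) (at \<zeta>)"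
      by (rule DERIV_cong[OF DERIV_mult[OF DERIV_ident]]) (simp add: power2_eq_square algebra_simps)
    then show "((\<lambda>\<zeta>. \<zeta> * V (\<zeta> ^ 2 * w)) has_field_derivative
        V (\<zeta> ^ 2 * w) + 2 * (\<zeta> ^ 2 * w) * deriv V (\<zeta> ^ 2 * w)) (at \<zeta> within cball 0 1)"
      by (rule has_field_derivative_at_within)
    show "norm (V (\<zeta> ^ 2 * w) + 2 * (\<zeta> ^ 2 * w) * deriv V (\<zeta> ^ 2 * w)) \<le> lam"
      using bound[OF in_disk[OF \<zeta>]] .
  qed auto
  then show ?thesis
    by simp
qed

lemma even_part_deriv_identity:
  assumes G: "G holomorphic_on unit_disk" and V: "V holomorphic_on unit_disk"
    and even: "\<And>z. z \<in> unit_disk \<Longrightarrow> G z + G (- z) = 2 * z ^ 2 * V (z ^ 2)"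
    and z: "z \<in> unit_disk"
  shows "z ^ 2 * (V (z ^ 2) + 2 * z ^ 2 * deriv V (z ^ 2))
    = ((z * deriv G z - G z) + (- z * deriv G (- z) - G (- z))) / 2"
proof -
  have z2: "z ^ 2 \<in> unit_disk" and mz: "- z \<in> unit_disk"
    using z by (simp_all add: norm_power power_less_one_iff)
  have "((\<lambda>x. G (- x)) has_field_derivative deriv G (- z) * - 1) (at z)"
    using holomorphic_derivI[OF G open_ball mz, of UNIV] DERIV_minus[OF DERIV_ident]
    by (rule DERIV_chain2)
  from DERIV_add[OF holomorphic_derivI[OF G open_ball z, of UNIV] this]
  have "((\<lambda>x. G x + G (- x)) has_field_derivative deriv G z - deriv G (- z)) (at z)"
    by simp
  then have G_deriv: "((\<lambda>x. 2 * x ^ 2 * V (x ^ 2)) has_field_derivative deriv G z - deriv G (- z)) (at z)"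
    by (rule has_field_derivative_transform_within_open[where S = unit_disk]) (use z even in auto)
  have sq: "((\<lambda>x. x ^ 2) has_field_derivative 2 * z) (at z)"
    by (auto intro!: derivative_eq_intros)
  have "((\<lambda>x. V (x ^ 2)) has_field_derivative deriv V (z ^ 2) * (2 * z)) (at z)"
    using holomorphic_derivI[OF V open_ball z2, of UNIV] sq by (rule DERIV_chain2)
  from DERIV_mult[OF DERIV_cmult[OF sq, of 2] this]
  have "((\<lambda>x. 2 * x ^ 2 * V (x ^ 2)) has_field_derivative
      4 * z * V (z ^ 2) + 4 * z ^ 3 * deriv V (z ^ 2)) (at z)"
    by (rule DERIV_cong) (simp add: power2_eq_square power3_eq_cube algebra_simps)
  with G_deriv have deriv_eq: "deriv G z - deriv G (- z) = 4 * z * V (z ^ 2) + 4 * z ^ 3 * deriv V (z ^ 2)"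
    by (rule DERIV_unique)
  have "(z * deriv G z - G z) + (- z * deriv G (- z) - G (- z))
      = z * (deriv G z - deriv G (- z)) - (G z + G (- z))"
    by (simp add: algebra_simps)
  also have "\<dots> = 2 * (z ^ 2 * (V (z ^ 2) + 2 * z ^ 2 * deriv V (z ^ 2)))"
    unfolding deriv_eq even[OF z] by (simp add: algebra_simps power2_eq_square power3_eq_cube)
  finally show ?thesis
    by simp
qed

lemma even_part_bounds:
  assumes G: "G holomorphic_on unit_disk" and V: "V holomorphic_on unit_disk"
    and even: "\<And>z. z \<in> unit_disk \<Longrightarrow> G z + G (- z) = 2 * z ^ 2 * V (z ^ 2)"
    and bound: "\<And>z. z \<in> unit_disk - {0} \<Longrightarrow> norm (z * deriv G z - G z) < lam"
    and w: "w \<in> unit_disk"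
  shows "norm (V w) \<le> lam" and "norm (w * deriv V w) \<le> lam"
proof -
  define Q where "Q u = V u + 2 * u * deriv V u" for u
  have "Q holomorphic_on unit_disk"
    unfolding Q_def using V by (intro holomorphic_intros holomorphic_deriv) auto
  moreover have "norm (u * Q u) < lam" if "u \<in> unit_disk" for u
  proof (cases "u = 0")
    case True
    then show ?thesis
      using bound[of "1/2"] by (auto intro: le_less_trans[OF norm_ge_zero])
  next
    case False
    define z where "z = csqrt u"
    have z: "z \<in> unit_disk - {0}" "- z \<in> unit_disk - {0}" and u: "u = z ^ 2"
      using that False by (auto simp: z_def)
    have "u * Q u = ((z * deriv G z - G z) + (- z * deriv G (- z) - G (- z))) / 2"
      unfolding u Q_def using z by (intro even_part_deriv_identity[OF G V even]) auto
    then have "norm (u * Q u) = norm ((z * deriv G z - G z) + (- z * deriv G (- z) - G (- z))) / 2"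
      by (simp only: norm_divide norm_numeral)
    also have "\<dots> \<le> (norm (z * deriv G z - G z) + norm (- z * deriv G (- z) - G (- z))) / 2"
      by (rule divide_right_mono[OF norm_triangle_ineq]) simp
    also have "\<dots> < lam"
      using bound[OF z(1)] bound[OF z(2)] by simp
    finally show ?thesis .
  qed
  ultimately have Q_le: "norm (Q u) \<le> lam" if "u \<in> unit_disk" for u
    using that by (rule norm_le_if_norm_mult_less)
  show V_le: "norm (V w) \<le> lam"
    using V Q_le w unfolding Q_def by (rule norm_le_if_norm_add_2_mult_deriv_le)
  have "2 * norm (w * deriv V w) = norm (Q w - V w)"
    unfolding Q_def by (simp add: norm_mult)
  also have "\<dots> \<le> norm (Q w) + norm (V w)"
    by (rule norm_triangle_ineq4)
  finally show "norm (w * deriv V w) \<le> lam"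
    using Q_le[OF w] V_le by simp
qed

lemma reciprocal_mult_in_classU:
  assumes V: "V holomorphic_on unit_disk" and "0 < lam" "lam \<le> 1"
    and V_le: "\<And>w. w \<in> unit_disk \<Longrightarrow> norm (V w) \<le> lam"
    and V'_le: "\<And>w. w \<in> unit_disk \<Longrightarrow> norm (w * deriv V w) \<le> lam"
    and H: "\<And>z. z \<in> unit_disk \<Longrightarrow> H z = z * V z"
  shows "(\<lambda>z. z / (1 + H z)) \<in> classU lam"
proof (rule reciprocal_in_classU)
  have zV: "(\<lambda>z. z * V z) holomorphic_on unit_disk"
    using V by (intro holomorphic_intros)
  then show H_hol: "H holomorphic_on unit_disk"
    by (rule holomorphic_transform) (simp add: H)
  show "H 0 = 0"
    using H by simp
  show "norm (H z) < 1" if "z \<in> unit_disk" for z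
  proof -
    have "norm (H z) \<le> norm z * lam"
      using H[OF that] V_le[OF that] by (simp add: norm_mult mult_left_mono)
    also have "\<dots> < 1"
      using that \<open>lam \<le> 1\<close> mult_left_le[of lam "norm z"] by simp
    finally show ?thesis .
  qed
  show "norm (H z - z * deriv H z) < lam" if "z \<in> unit_disk - {0}" for z
  proof -
    have z: "z \<in> unit_disk"
      using that by simp
    have "deriv H z = deriv (\<lambda>z. z * V z) z"
      using H_hol zV H z by (intro complex_derivative_transform_within_open) auto
    also have "\<dots> = V z + z * deriv V z"
      using DERIV_imp_deriv[OF DERIV_mult[OF DERIV_ident holomorphic_derivI[OF V open_ball z]]]
      by simp
    finally have "H z - z * deriv H z = - (z * (z * deriv V z))"
      using H[OF z] by (simp add: algebra_simps)
    then have "norm (H z - z * deriv H z) = norm z * norm (z * deriv V z)"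
      by (simp add: norm_mult)
    also have "\<dots> \<le> norm z * lam"
      using V'_le[OF z] by (simp add: mult_left_mono)
    also have "\<dots> < lam"
      using z \<open>0 < lam\<close> by simp
    finally show ?thesis .
  qed
qed

lemma even_part_reciprocal_in_classU:
  fixes a :: "nat \<Rightarrow> complex"
  defines "G \<equiv> \<lambda>z. \<Sum>n. a n * z ^ n"
  assumes lam: "0 < lam" "lam \<le> 1"
    and summable: "\<And>z. z \<in> unit_disk \<Longrightarrow> summable (\<lambda>n. a n * z ^ n)" and "a 0 = 0"
    and bound: "\<And>z. z \<in> unit_disk - {0} \<Longrightarrow> norm (z * deriv G z - G z) < lam"
  shows "(\<forall>z\<in>unit_disk. summable (\<lambda>n. a (2 * Suc n) * z ^ Suc n))
    \<and> (\<lambda>z. z / (1 + (\<Sum>n. a (2 * Suc n) * z ^ Suc n))) \<in> classU lam"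
proof -
  define V where "V w = (\<Sum>n. a (2 * Suc n) * w ^ n)" for w
  have V_sums: "(\<lambda>n. a (2 * Suc n) * w ^ n) sums V w" if "w \<in> unit_disk" for w
    unfolding V_def using summable \<open>a 0 = 0\<close> that by (rule powser_even_part)
  have G_even: "G z + G (- z) = 2 * z ^ 2 * V (z ^ 2)" if "z \<in> unit_disk" for z
    unfolding G_def V_def using summable \<open>a 0 = 0\<close> that by (rule powser_even_part)
  have G: "G holomorphic_on unit_disk"
    unfolding G_def using summable by (rule powser_holomorphic_on_ball)
  have V: "V holomorphic_on unit_disk"
    unfolding V_def using V_sums sums_summable by (intro powser_holomorphic_on_ball) blast
  have V_le: "norm (V w) \<le> lam" if "w \<in> unit_disk" for w
    using G V G_even bound that by (rule even_part_bounds(1))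
  have V'_le: "norm (w * deriv V w) \<le> lam" if "w \<in> unit_disk" for w
    using G V G_even bound that by (rule even_part_bounds(2))
  have H_sums: "(\<lambda>n. a (2 * Suc n) * z ^ Suc n) sums (z * V z)" if "z \<in> unit_disk" for z
    using sums_mult[OF V_sums[OF that], of z] by (simp add: mult_ac)
  then have "(\<Sum>n. a (2 * Suc n) * z ^ Suc n) = z * V z" if "z \<in> unit_disk" for z
    using that by (simp add: sums_iff)
  with V lam V_le V'_le
  have "(\<lambda>z. z / (1 + (\<Sum>n. a (2 * Suc n) * z ^ Suc n))) \<in> classU lam"
    by (rule reciprocal_mult_in_classU)
  moreover have "summable (\<lambda>n. a (2 * Suc n) * z ^ Suc n)" if "z \<in> unit_disk" for z
    using H_sums[OF that] by (rule sums_summable)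
  ultimately show ?thesis
    by simp
qed

theorem mainTheorem14:
  fixes lam :: real and f :: "complex \<Rightarrow> complex" and b :: "nat \<Rightarrow> complex"
  assumes "0 < lam" and "lam \<le> 1"
    and "f \<in> classU lam"
    and "\<forall>z\<in>unit_disk - {0}. (\<lambda>k. b (Suc k) * z ^ Suc k) sums (z / f z - 1)"
  shows "(\<forall>z\<in>unit_disk. summable (\<lambda>n. b (2 * Suc n) * z ^ Suc n))
    \<and> (\<lambda>z. z / (1 + (\<Sum>n. b (2 * Suc n) * z ^ Suc n))) \<in> classU lam"
proof -
  define a where "a n = (if n = 0 then 0 else b n)" for n
  define G where "G = (\<lambda>z. \<Sum>n. a n * z ^ n)"
  have a_sums: "(\<lambda>n. a n * z ^ n) sums (z / f z - 1)" if "z \<in> unit_disk - {0}" for z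
    using assms(4)[rule_format, OF that] sums_Suc_iff[of "\<lambda>n. a n * z ^ n"] by (simp add: a_def)
  have a_summable: "summable (\<lambda>n. a n * z ^ n)" if "z \<in> unit_disk" for z
    using a_sums[of z] that powser_sums_zero[of a] by (cases "z = 0") (auto simp: sums_iff)
  have "G holomorphic_on unit_disk"
    unfolding G_def using a_summable by (rule powser_holomorphic_on_ball)
  moreover have "z / f z = 1 + G z" if "z \<in> unit_disk - {0}" for z
    using a_sums[OF that] unfolding G_def by (simp add: sums_iff)
  ultimately have "norm (z * deriv G z - G z) < lam" if "z \<in> unit_disk - {0}" for z
    using assms(3) that by (intro classU_reciprocal_bound)
  with assms(1,2) a_summable have "(\<forall>z\<in>unit_disk. summable (\<lambda>n. a (2 * Suc n) * z ^ Suc n))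
    \<and> (\<lambda>z. z / (1 + (\<Sum>n. a (2 * Suc n) * z ^ Suc n))) \<in> classU lam"
    unfolding G_def by (intro even_part_reciprocal_in_classU) (simp_all add: a_def)
  then show ?thesis
    by (simp add: a_def)
qed

end
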